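(* There exists an absolute constant $C>0$ and, for each $q\in[2,\infty)$, a constant $c_q>0$ such that the following holds. Let $N,n,m\in\mathbb N$, let $w_1,\dots,w_N\ge 0$ be weights with $\sum_{i=1}^N w_i>0$, and let $\{1,\dots,N\}=\bigsqcup_{s=1}^m\Delta_s$ be a partition into $m$ blocks with $N_s=|\Delta_s|$. Assume: 1) $\max_{1\le i\le N}w_i\le (4n)^{-1}\sum_{i=1}^N w_i$; 2) for every $s=1,\dots,m$, $\nu_s:=\dfrac{\sum_{i\in\Delta_s}w_i}{\sum_{i=1}^N w_i}\ge \dfrac{C\log(2m)}{n}$. Let $q\in[2,\infty)$, $h>0$, and let $X=(\mathbb R^N,\|\cdot\|_X)$ be a normed space with $\|x\|_X\ge\max(\|x\|_{\ell^N_{q,w}},\,h\|x\|_\infty)$ for all $x\in\mathbb R^N$. Then $$d_n\Big(\prod_{s=1}^m B_1^{N_s},X\Big)\ge\min\Big(c_q\,\big(n\max_{1\le s\le m}\nu_s\big)^{-1/2}\Big(\sum_{i=1}^N w_i\Big)^{1/q},\ h/2\Big).$$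
   Context: The weighted norm is $\|x\|_{\ell^N_{q,w}}=\left(\sum_{i=1}^N w_i|x_i|^q\right)^{1/q}$ and $\|x\|_\infty=\max_i|x_i|$. The product of octahedra is $\prod_{s=1}^m B_1^{N_s}=\{x\in\mathbb R^N:\sum_{i\in\Delta_s}|x_i|\le 1\ \text{for } s=1,\dots,m\}$. For a normed space $X$ and $K\subset X$, the Kolmogorov $n$-width is $d_n(K,X)=\inf_{Q_n}\sup_{x\in K}\inf_{y\in Q_n}\|x-y\|_X$, the infimum over linear subspaces $Q_n\subset X$ with $\dim Q_n\le n$. *)

theory Defs
  imports "HOL-Analysis.Analysis" "HOL-Library.Function_Algebras"
begin

text \<open>Vectors of R^N are represented as functions nat => real vanishing outside
  the index set {0..<N} (0-based indexing of the coordinates 1..N).\<close>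

definition fscale :: "real \<Rightarrow> (nat \<Rightarrow> real) \<Rightarrow> (nat \<Rightarrow> real)" where
  "fscale c x = (\<lambda>i. c * x i)"

definition RN :: "nat \<Rightarrow> (nat \<Rightarrow> real) set" where
  "RN N = {x. \<forall>i. N \<le> i \<longrightarrow> x i = 0}"

definition is_norm_on :: "nat \<Rightarrow> ((nat \<Rightarrow> real) \<Rightarrow> real) \<Rightarrow> bool" where
  "is_norm_on N nX \<longleftrightarrow>
     (\<forall>x\<in>RN N. nX x = 0 \<longleftrightarrow> x = 0) \<and>
     (\<forall>c. \<forall>x\<in>RN N. nX (fscale c x) = \<bar>c\<bar> * nX x) \<and>
     (\<forall>x\<in>RN N. \<forall>y\<in>RN N. nX (x + y) \<le> nX x + nX y)"

definition wnorm :: "real \<Rightarrow> (nat \<Rightarrow> real) \<Rightarrow> nat \<Rightarrow> (nat \<Rightarrow> real) \<Rightarrow> real" where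
  "wnorm q w N x = (\<Sum>i<N. w i * \<bar>x i\<bar> powr q) powr (1 / q)"

definition supnorm :: "nat \<Rightarrow> (nat \<Rightarrow> real) \<Rightarrow> real" where
  "supnorm N x = Max ((\<lambda>i. \<bar>x i\<bar>) ` {..<N})"

definition octa_prod :: "nat \<Rightarrow> nat \<Rightarrow> (nat \<Rightarrow> nat set) \<Rightarrow> (nat \<Rightarrow> real) set" where
  "octa_prod N m \<Delta> = {x \<in> RN N. \<forall>s\<in>{1..m}. (\<Sum>i\<in>\<Delta> s. \<bar>x i\<bar>) \<le> 1}"

definition kolmogorov_width ::
  "nat \<Rightarrow> ((nat \<Rightarrow> real) \<Rightarrow> real) \<Rightarrow> (nat \<Rightarrow> real) set \<Rightarrow> nat \<Rightarrow> real" where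
  "kolmogorov_width N nX K n =
     Inf {Sup ((\<lambda>x. Inf ((\<lambda>y. nX (x - y)) ` Q)) ` K) | Q.
            Q \<subseteq> RN N \<and> module.subspace fscale Q \<and> vector_space.dim fscale Q \<le> n}"

end

theory Submission
  imports Defs
begin

text \<open>
  Suppose a subspace Q of dimension at most n approximates every point of the product of
  octahedra within t. Test Q on the random vertices x = sum of e_s times the s-th chosen unit
  vector, where in every block s an index i_s is drawn with probability w_i / W_s and a sign e_s
  uniformly, and let y_x in Q approximate x. For the functionals L_x y = sum of W_s e_s y(i_s),
  the sup-norm part of the norm forces L_x(y_x) >= W/2 on average, while the weighted l_q part,
  through the power mean inequality, makes the second moments E_x' L_x'(y_x)^2 small. Since the
  functions x' => L_x'(y_x) all lie in an n-dimensional space, the trace inequality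
  (E_x L_x(y_x))^2 <= n E_x E_x' L_x'(y_x)^2 holds, and the two estimates contradict it.
\<close>

section \<open>Coordinates and norms on R^N\<close>

lemma fscale_apply [simp]: "fscale c x i = c * x i"
  by (simp add: fscale_def)

interpretation fs: vector_space fscale
  by unfold_locales (auto simp: fscale_def algebra_simps)

lemma sum_fun_apply: "(\<Sum>a\<in>A. f a) i = (\<Sum>a\<in>A. (f a i :: real))"
  by (induction A rule: infinite_finite_induct) auto

definition unit_vec :: "nat \<Rightarrow> nat \<Rightarrow> real" where
  "unit_vec j = (\<lambda>i. if i = j then 1 else 0)"

lemma RN_zero: "0 \<in> RN N"
  by (simp add: RN_def)

lemma RN_add: "x \<in> RN N \<Longrightarrow> y \<in> RN N \<Longrightarrow> x + y \<in> RN N"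
  by (simp add: RN_def)

lemma RN_diff: "x \<in> RN N \<Longrightarrow> y \<in> RN N \<Longrightarrow> x - y \<in> RN N"
  by (simp add: RN_def)

lemma RN_fscale: "x \<in> RN N \<Longrightarrow> fscale c x \<in> RN N"
  by (simp add: RN_def)

lemma RN_sum: "(\<And>a. a \<in> A \<Longrightarrow> v a \<in> RN N) \<Longrightarrow> (\<Sum>a\<in>A. v a) \<in> RN N"
  by (induction A rule: infinite_finite_induct) (auto intro: RN_add RN_zero)

lemma unit_vec_RN: "j < N \<Longrightarrow> unit_vec j \<in> RN N"
  by (simp add: RN_def unit_vec_def)

lemma RN_eq_sum_unit_vec:
  assumes "x \<in> RN N"
  shows "x = (\<Sum>j<N. fscale (x j) (unit_vec j))"
proof
  fix i show "x i = (\<Sum>j<N. fscale (x j) (unit_vec j)) i"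
    using assms by (cases "i < N") (auto simp: sum_fun_apply unit_vec_def RN_def if_distrib cong: if_cong)
qed

lemma RN_subset_span_unit_vec: "RN N \<subseteq> fs.span (unit_vec ` {..<N})"
proof
  fix x assume "x \<in> RN N"
  then have "x = (\<Sum>j<N. fscale (x j) (unit_vec j))" by (rule RN_eq_sum_unit_vec)
  also have "\<dots> \<in> fs.span (unit_vec ` {..<N})"
    by (intro fs.span_sum fs.span_scale fs.span_base) auto
  finally show "x \<in> fs.span (unit_vec ` {..<N})" .
qed

lemma RN_subspace_finite_spanning_set:
  assumes "Q \<subseteq> RN N"
  obtains B where "finite B" "card B = fs.dim Q" "\<And>y. y \<in> Q \<Longrightarrow> \<exists>u. y = (\<Sum>b\<in>B. fscale (u b) b)"
proof -
  obtain B where B: "B \<subseteq> Q" "fs.independent B" "Q \<subseteq> fs.span B" "card B = fs.dim Q"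
    using fs.basis_exists by blast
  have "finite B"
    using fs.independent_span_bound[of "unit_vec ` {..<N}" B] B assms RN_subset_span_unit_vec by blast
  then show ?thesis
    using that[of B] B fs.span_finite[of B] by auto
qed

lemma is_norm_on_scale: "is_norm_on N nX \<Longrightarrow> x \<in> RN N \<Longrightarrow> nX (fscale c x) = \<bar>c\<bar> * nX x"
  unfolding is_norm_on_def by blast

lemma is_norm_on_triangle:
  "is_norm_on N nX \<Longrightarrow> x \<in> RN N \<Longrightarrow> y \<in> RN N \<Longrightarrow> nX (x + y) \<le> nX x + nX y"
  unfolding is_norm_on_def by blast

lemma is_norm_on_zero: "is_norm_on N nX \<Longrightarrow> nX 0 = 0"
  unfolding is_norm_on_def using RN_zero by blast

lemma is_norm_on_nonneg:
  assumes norm: "is_norm_on N nX" and x: "x \<in> RN N"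
  shows "0 \<le> nX x"
proof -
  have "x + fscale (-1) x = 0" by (rule ext) simp
  then have "0 = nX (x + fscale (-1) x)"
    using is_norm_on_zero[OF norm] by (simp only:)
  also have "\<dots> \<le> nX x + nX (fscale (-1) x)"
    by (rule is_norm_on_triangle[OF norm x RN_fscale[OF x]])
  also have "nX (fscale (-1) x) = nX x"
    using is_norm_on_scale[OF norm x, of "-1"] by simp
  finally show ?thesis by simp
qed

lemma is_norm_on_sum_le:
  assumes norm: "is_norm_on N nX" and v: "\<And>a. a \<in> A \<Longrightarrow> v a \<in> RN N"
  shows "nX (\<Sum>a\<in>A. v a) \<le> (\<Sum>a\<in>A. nX (v a))"
  using v
proof (induction A rule: infinite_finite_induct)
  case (insert a A)
  have "nX (v a + (\<Sum>a\<in>A. v a)) \<le> nX (v a) + nX (\<Sum>a\<in>A. v a)"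
    using insert.prems RN_sum[of A v N] by (intro is_norm_on_triangle[OF norm]) auto
  moreover have "nX (\<Sum>a\<in>A. v a) \<le> (\<Sum>a\<in>A. nX (v a))"
    using insert by simp
  ultimately show ?case
    unfolding sum.insert[OF insert(1,2)] by linarith
qed (simp_all add: is_norm_on_zero[OF norm])

lemma is_norm_on_le_sum_unit_vec:
  assumes norm: "is_norm_on N nX" and x: "x \<in> RN N" and bounded: "\<And>j. j < N \<Longrightarrow> \<bar>x j\<bar> \<le> 1"
  shows "nX x \<le> (\<Sum>j<N. nX (unit_vec j))"
proof -
  have "nX x \<le> (\<Sum>j<N. nX (fscale (x j) (unit_vec j)))"
    by (subst RN_eq_sum_unit_vec[OF x], rule is_norm_on_sum_le[OF norm])
      (auto intro: RN_fscale unit_vec_RN)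
  also have "\<dots> = (\<Sum>j<N. \<bar>x j\<bar> * nX (unit_vec j))"
    using is_norm_on_scale[OF norm unit_vec_RN] by simp
  also have "\<dots> \<le> (\<Sum>j<N. nX (unit_vec j))"
    using bounded is_norm_on_nonneg[OF norm unit_vec_RN]
    by (intro sum_mono) (auto intro: mult_left_le_one_le)
  finally show ?thesis .
qed

section \<open>Traces of kernels of bounded rank\<close>

definition weighted_inner :: "'r set \<Rightarrow> ('r \<Rightarrow> real) \<Rightarrow> ('r \<Rightarrow> real) \<Rightarrow> ('r \<Rightarrow> real) \<Rightarrow> real" where
  "weighted_inner R \<mu> f g = (\<Sum>r\<in>R. \<mu> r * f r * g r)"

definition orthonormal_on :: "'r set \<Rightarrow> ('r \<Rightarrow> real) \<Rightarrow> ('r \<Rightarrow> real) set \<Rightarrow> bool" where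
  "orthonormal_on R \<mu> G \<longleftrightarrow> (\<forall>g\<in>G. \<forall>g'\<in>G. weighted_inner R \<mu> g g' = (if g = g' then 1 else 0))"

definition expands_in :: "'r set \<Rightarrow> ('r \<Rightarrow> real) \<Rightarrow> ('r \<Rightarrow> real) set \<Rightarrow> ('r \<Rightarrow> real) \<Rightarrow> bool" where
  "expands_in R \<mu> G f \<longleftrightarrow> (\<forall>r\<in>R. \<mu> r * (f r - (\<Sum>g\<in>G. weighted_inner R \<mu> f g * g r)) = 0)"

lemma weighted_inner_commute: "weighted_inner R \<mu> f g = weighted_inner R \<mu> g f"
  unfolding weighted_inner_def by (simp add: ac_simps)

lemma weighted_inner_self_nonneg: "(\<And>r. r \<in> R \<Longrightarrow> 0 \<le> \<mu> r) \<Longrightarrow> 0 \<le> weighted_inner R \<mu> f f"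
  unfolding weighted_inner_def by (intro sum_nonneg) (simp add: mult.assoc)

lemma weighted_inner_self_eq_0D:
  assumes "finite R" "\<And>r. r \<in> R \<Longrightarrow> 0 \<le> \<mu> r" "weighted_inner R \<mu> f f = 0" "r \<in> R"
  shows "\<mu> r * f r = 0"
proof -
  have "\<mu> r * f r * f r = 0"
    using assms sum_nonneg_eq_0_iff[of R "\<lambda>r. \<mu> r * f r * f r"] unfolding weighted_inner_def
    by (simp add: mult.assoc)
  then show ?thesis by simp
qed

lemma weighted_inner_null_left: "(\<And>r. r \<in> R \<Longrightarrow> \<mu> r * f r = 0) \<Longrightarrow> weighted_inner R \<mu> f g = 0"
  unfolding weighted_inner_def by (rule sum.neutral) auto

lemma weighted_inner_diff_sum_left:
  "weighted_inner R \<mu> (\<lambda>r. f r - (\<Sum>g\<in>G. c g * g r)) h = weighted_inner R \<mu> f h - (\<Sum>g\<in>G. c g * weighted_inner R \<mu> g h)"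
  unfolding weighted_inner_def
  by (simp add: algebra_simps sum_subtractf sum_distrib_left sum_distrib_right sum.swap[of _ G])

lemma weighted_inner_sum_left:
  "weighted_inner R \<mu> (\<lambda>r. \<Sum>b\<in>B. u b * P b r) h = (\<Sum>b\<in>B. u b * weighted_inner R \<mu> (P b) h)"
  unfolding weighted_inner_def
  by (simp add: algebra_simps sum_distrib_left sum_distrib_right sum.swap[of _ B])

lemma sum_coeff_weighted_inner_orthonormal:
  assumes "orthonormal_on R \<mu> G" "finite G" "g' \<in> G"
  shows "(\<Sum>g\<in>G. c g * weighted_inner R \<mu> g g') = c g'"
proof -
  have "(\<Sum>g\<in>G. c g * weighted_inner R \<mu> g g') = (\<Sum>g\<in>G. if g = g' then c g else 0)"
    using assms unfolding orthonormal_on_def by (intro sum.cong) auto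
  also have "\<dots> = c g'" using assms by (simp add: sum.delta')
  finally show ?thesis .
qed

lemma expands_in_weighted_inner_eq_0:
  assumes "expands_in R \<mu> G f" "\<And>g. g \<in> G \<Longrightarrow> weighted_inner R \<mu> g e = 0"
  shows "weighted_inner R \<mu> f e = 0"
proof -
  have "weighted_inner R \<mu> (\<lambda>r. f r - (\<Sum>g\<in>G. weighted_inner R \<mu> f g * g r)) e = 0"
    using assms(1) unfolding expands_in_def by (intro weighted_inner_null_left) auto
  then show ?thesis
    using assms(2) by (simp add: weighted_inner_diff_sum_left)
qed

lemma orthonormal_on_insert:
  assumes G: "orthonormal_on R \<mu> G" and norm: "weighted_inner R \<mu> g0 g0 = 1"
    and orth: "\<And>g. g \<in> G \<Longrightarrow> weighted_inner R \<mu> g0 g = 0"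
  shows "orthonormal_on R \<mu> (insert g0 G)"
  unfolding orthonormal_on_def
proof (intro ballI)
  have notin: "g0 \<notin> G"
  proof
    assume "g0 \<in> G"
    with norm orth show False by simp
  qed
  fix g g' assume "g \<in> insert g0 G" "g' \<in> insert g0 G"
  then consider "g = g0" "g' = g0" | "g = g0" "g' \<in> G" | "g \<in> G" "g' = g0" | "g \<in> G" "g' \<in> G"
    by blast
  then show "weighted_inner R \<mu> g g' = (if g = g' then 1 else 0)"
  proof cases
    case 1 then show ?thesis using norm by simp
  next
    case 2 then show ?thesis using orth notin by auto
  next
    case 3 then show ?thesis using orth notin weighted_inner_commute[of R \<mu> g g0] by auto
  next
    case 4 then show ?thesis using G unfolding orthonormal_on_def by blast
  qed
qed

lemma expands_in_insert:
  assumes "finite G" "g0 \<notin> G"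
    and residual: "\<And>r. r \<in> R \<Longrightarrow>
      \<mu> r * (f r - (\<Sum>g\<in>G. weighted_inner R \<mu> f g * g r)) = \<mu> r * weighted_inner R \<mu> f g0 * g0 r"
  shows "expands_in R \<mu> (insert g0 G) f"
  unfolding expands_in_def sum.insert[OF assms(1,2)]
proof
  fix r assume "r \<in> R"
  then have "\<mu> r * (f r - (\<Sum>g\<in>G. weighted_inner R \<mu> f g * g r)) = \<mu> r * (weighted_inner R \<mu> f g0 * g0 r)"
    using residual by (simp add: mult.assoc)
  then show "\<mu> r * (f r - (weighted_inner R \<mu> f g0 * g0 r + (\<Sum>g\<in>G. weighted_inner R \<mu> f g * g r))) = 0"
    by (simp add: algebra_simps)
qed

text \<open>One Gram--Schmidt step: normalise the residual of p, unless it is null.\<close>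
lemma orthonormal_on_extend:
  assumes R: "finite R" and \<mu>: "\<And>r. r \<in> R \<Longrightarrow> 0 \<le> \<mu> r"
    and G: "finite G" "orthonormal_on R \<mu> G"
  shows "\<exists>G'. finite G' \<and> card G' \<le> card G + 1 \<and> orthonormal_on R \<mu> G' \<and>
    expands_in R \<mu> G' p \<and> (\<forall>f. expands_in R \<mu> G f \<longrightarrow> expands_in R \<mu> G' f)"
proof -
  define d where "d = (\<lambda>r. p r - (\<Sum>g\<in>G. weighted_inner R \<mu> p g * g r))"
  have d_orth: "weighted_inner R \<mu> d g = 0" if "g \<in> G" for g
    unfolding d_def weighted_inner_diff_sum_left
    using sum_coeff_weighted_inner_orthonormal[OF G(2,1) that] by simp
  show ?thesis
  proof (cases "weighted_inner R \<mu> d d = 0")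
    case True
    have "\<mu> r * d r = 0" if "r \<in> R" for r
      using weighted_inner_self_eq_0D[where f=d] R \<mu> True that by blast
    then have "expands_in R \<mu> G p"
      unfolding expands_in_def d_def by blast
    then show ?thesis using G by (intro exI[of _ G]) auto
  next
    case False
    have "0 \<le> weighted_inner R \<mu> d d" by (rule weighted_inner_self_nonneg) (rule \<mu>)
    with False have pos: "0 < weighted_inner R \<mu> d d" by simp
    define \<sigma> where "\<sigma> = sqrt (weighted_inner R \<mu> d d)"
    have \<sigma>: "0 < \<sigma>" "\<sigma> * \<sigma> = weighted_inner R \<mu> d d"
      unfolding \<sigma>_def using pos by simp_all
    define g0 where "g0 = (\<lambda>r. d r / \<sigma>)"
    have inner_g0: "weighted_inner R \<mu> g0 f = weighted_inner R \<mu> d f / \<sigma>" for f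
      unfolding g0_def weighted_inner_def by (simp add: sum_divide_distrib)
    have g0_orth: "weighted_inner R \<mu> g0 g = 0" if "g \<in> G" for g
      using inner_g0 d_orth[OF that] by simp
    have d_g0: "weighted_inner R \<mu> d g0 = \<sigma>"
    proof -
      have "weighted_inner R \<mu> d g0 = weighted_inner R \<mu> d d / \<sigma>"
        using inner_g0[of d] by (simp add: weighted_inner_commute)
      also have "\<dots> = \<sigma>" using \<sigma>(1) by (simp flip: \<sigma>(2))
      finally show ?thesis .
    qed
    have g0_norm: "weighted_inner R \<mu> g0 g0 = 1"
      using inner_g0[of g0] d_g0 \<sigma>(1) by simp
    have g0_notin: "g0 \<notin> G"
    proof
      assume "g0 \<in> G"
      with g0_orth g0_norm show False by simp
    qed
    have "weighted_inner R \<mu> p g0 = \<sigma>"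
      using d_g0 g0_orth unfolding d_def weighted_inner_diff_sum_left
      by (simp add: weighted_inner_commute)
    then have "expands_in R \<mu> (insert g0 G) p"
      using \<sigma>(1) by (intro expands_in_insert[OF G(1) g0_notin]) (simp add: g0_def d_def)
    moreover have "expands_in R \<mu> (insert g0 G) f" if "expands_in R \<mu> G f" for f
    proof (rule expands_in_insert[OF G(1) g0_notin])
      have "weighted_inner R \<mu> f g0 = 0"
        using expands_in_weighted_inner_eq_0[OF that, of g0] g0_orth
        by (simp add: weighted_inner_commute)
      then show "\<mu> r * (f r - (\<Sum>g\<in>G. weighted_inner R \<mu> f g * g r)) = \<mu> r * weighted_inner R \<mu> f g0 * g0 r"
        if "r \<in> R" for r
        using that \<open>expands_in R \<mu> G f\<close> unfolding expands_in_def by simp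
    qed
    moreover have "card (insert g0 G) \<le> card G + 1" using G(1) by (simp add: card_insert_if)
    ultimately show ?thesis
      using G(1) orthonormal_on_insert[OF G(2) g0_norm g0_orth]
      by (intro exI[of _ "insert g0 G"]) blast
  qed
qed

lemma orthonormal_expansion_exists:
  assumes R: "finite R" and \<mu>: "\<And>r. r \<in> R \<Longrightarrow> 0 \<le> \<mu> r" and B: "finite B"
  shows "\<exists>G. finite G \<and> card G \<le> card B \<and> orthonormal_on R \<mu> G \<and> (\<forall>b\<in>B. expands_in R \<mu> G (P b))"
  using B
proof (induction B rule: finite_induct)
  case empty
  show ?case by (rule exI[of _ "{}"]) (auto simp: orthonormal_on_def)
next
  case (insert b B)
  then obtain G where G: "finite G" "card G \<le> card B" "orthonormal_on R \<mu> G"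
    "\<forall>b\<in>B. expands_in R \<mu> G (P b)"
    by blast
  obtain G' where "finite G'" "card G' \<le> card G + 1" "orthonormal_on R \<mu> G'"
    "expands_in R \<mu> G' (P b)" "\<forall>f. expands_in R \<mu> G f \<longrightarrow> expands_in R \<mu> G' f"
    using orthonormal_on_extend[OF R \<mu> G(1,3), where p = "P b"] by blast
  with G insert.hyps show ?case
    by (intro exI[of _ G']) auto
qed

lemma expands_in_lincomb:
  assumes P: "\<And>b. b \<in> B \<Longrightarrow> expands_in R \<mu> G (P b)" and f: "\<And>r. r \<in> R \<Longrightarrow> f r = (\<Sum>b\<in>B. u b * P b r)"
  shows "expands_in R \<mu> G f"
  unfolding expands_in_def
proof
  fix r assume r: "r \<in> R"
  have weighted_inner_f: "weighted_inner R \<mu> f g = (\<Sum>b\<in>B. u b * weighted_inner R \<mu> (P b) g)" for g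
  proof -
    have "weighted_inner R \<mu> f g = weighted_inner R \<mu> (\<lambda>r. \<Sum>b\<in>B. u b * P b r) g"
      unfolding weighted_inner_def using f by (intro sum.cong) auto
    then show ?thesis by (simp add: weighted_inner_sum_left)
  qed
  have "\<mu> r * (f r - (\<Sum>g\<in>G. weighted_inner R \<mu> f g * g r))
     = (\<Sum>b\<in>B. u b * (\<mu> r * (P b r - (\<Sum>g\<in>G. weighted_inner R \<mu> (P b) g * g r))))"
    unfolding weighted_inner_f f[OF r]
    by (simp add: algebra_simps sum_subtractf sum_distrib_left sum_distrib_right sum.swap[of _ G])
  also have "\<dots> = 0"
    using P r unfolding expands_in_def by (intro sum.neutral) simp
  finally show "\<mu> r * (f r - (\<Sum>g\<in>G. weighted_inner R \<mu> f g * g r)) = 0" .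
qed

lemma Parseval_expands_in:
  assumes "expands_in R \<mu> G f"
  shows "(\<Sum>g\<in>G. (weighted_inner R \<mu> f g)\<^sup>2) = weighted_inner R \<mu> f f"
proof -
  have "\<mu> r * f r = \<mu> r * (\<Sum>g\<in>G. weighted_inner R \<mu> f g * g r)" if "r \<in> R" for r
    using assms that unfolding expands_in_def by (simp add: right_diff_distrib)
  then have "weighted_inner R \<mu> f f = (\<Sum>r\<in>R. (\<mu> r * (\<Sum>g\<in>G. weighted_inner R \<mu> f g * g r)) * f r)"
    unfolding weighted_inner_def by (intro sum.cong) simp_all
  also have "\<dots> = (\<Sum>g\<in>G. weighted_inner R \<mu> f g * weighted_inner R \<mu> g f)"
    unfolding weighted_inner_def by (simp add: sum_distrib_left sum_distrib_right sum.swap[of _ G] algebra_simps)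
  finally show ?thesis
    by (simp add: weighted_inner_commute power2_eq_square)
qed

lemma Cauchy_Schwarz_weighted_sum:
  assumes "\<And>r. r \<in> R \<Longrightarrow> 0 \<le> (\<mu> r :: real)"
  shows "(\<Sum>r\<in>R. \<mu> r * a r * b r)\<^sup>2 \<le> (\<Sum>r\<in>R. \<mu> r * (a r)\<^sup>2) * (\<Sum>r\<in>R. \<mu> r * (b r)\<^sup>2)"
proof -
  have "(\<Sum>r\<in>R. \<mu> r * a r * b r) = (\<Sum>r\<in>R. (sqrt (\<mu> r) * a r) * (sqrt (\<mu> r) * b r))"
    using assms by (intro sum.cong) (auto simp: algebra_simps simp flip: real_sqrt_mult)
  moreover have "(\<Sum>r\<in>R. \<mu> r * (f r)\<^sup>2) = (\<Sum>r\<in>R. (sqrt (\<mu> r) * f r)\<^sup>2)" for f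
    using assms by (intro sum.cong) (auto simp: power_mult_distrib)
  ultimately show ?thesis by (simp only: Cauchy_Schwarz_ineq_sum)
qed

lemma trace_sq_le_rank_mult_hs_norm:
  assumes R: "finite R" and \<mu>: "\<And>r. r \<in> R \<Longrightarrow> 0 \<le> \<mu> r" and B: "finite B" "card B \<le> n"
    and Y: "\<And>r'. r' \<in> R \<Longrightarrow> \<exists>u. \<forall>r\<in>R. Y r' r = (\<Sum>b\<in>B. u b * P b r)"
  shows "(\<Sum>r\<in>R. \<mu> r * Y r r)\<^sup>2 \<le> real n * (\<Sum>r'\<in>R. \<mu> r' * weighted_inner R \<mu> (Y r') (Y r'))"
proof -
  obtain G where G: "finite G" "card G \<le> card B" "orthonormal_on R \<mu> G"
    "\<forall>b\<in>B. expands_in R \<mu> G (P b)"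
    using orthonormal_expansion_exists[of R \<mu> B P] R \<mu> B(1) by auto
  have Y_expands: "expands_in R \<mu> G (Y r')" if r': "r' \<in> R" for r'
  proof -
    obtain u where "\<forall>r\<in>R. Y r' r = (\<Sum>b\<in>B. u b * P b r)" using Y[OF r'] by blast
    then show ?thesis using G(4) by (auto intro: expands_in_lincomb[where P = P and u = u])
  qed
  define \<beta> where "\<beta> g = (\<Sum>r\<in>R. \<mu> r * weighted_inner R \<mu> (Y r) g * g r)" for g
  define \<alpha> where "\<alpha> g = (\<Sum>r\<in>R. \<mu> r * (weighted_inner R \<mu> (Y r) g)\<^sup>2)" for g
  have "(\<Sum>r\<in>R. \<mu> r * Y r r) = (\<Sum>r\<in>R. \<mu> r * (\<Sum>g\<in>G. weighted_inner R \<mu> (Y r) g * g r))"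
    using Y_expands unfolding expands_in_def by (intro sum.cong) (simp_all add: right_diff_distrib)
  also have "\<dots> = (\<Sum>g\<in>G. 1 * \<beta> g)"
    unfolding \<beta>_def by (simp add: sum_distrib_left sum.swap[of _ G] mult.assoc)
  finally have "(\<Sum>r\<in>R. \<mu> r * Y r r)\<^sup>2 = (\<Sum>g\<in>G. 1 * \<beta> g)\<^sup>2" by simp
  also have "\<dots> \<le> (\<Sum>g\<in>G. 1\<^sup>2) * (\<Sum>g\<in>G. (\<beta> g)\<^sup>2)"
    by (rule Cauchy_Schwarz_ineq_sum)
  also have "\<dots> \<le> real n * (\<Sum>g\<in>G. \<alpha> g)"
  proof (rule mult_mono)
    show "(\<Sum>g\<in>G. (1::real)\<^sup>2) \<le> real n" using G(2) B(2) by simp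
    show "(\<Sum>g\<in>G. (\<beta> g)\<^sup>2) \<le> (\<Sum>g\<in>G. \<alpha> g)"
    proof (rule sum_mono)
      fix g assume g: "g \<in> G"
      have "(\<beta> g)\<^sup>2 \<le> \<alpha> g * (\<Sum>r\<in>R. \<mu> r * (g r)\<^sup>2)"
        unfolding \<beta>_def \<alpha>_def by (rule Cauchy_Schwarz_weighted_sum) (rule \<mu>)
      moreover have "(\<Sum>r\<in>R. \<mu> r * (g r)\<^sup>2) = 1"
        using G(3) g unfolding orthonormal_on_def weighted_inner_def by (auto simp: power2_eq_square mult.assoc)
      ultimately show "(\<beta> g)\<^sup>2 \<le> \<alpha> g" by simp
    qed
  qed (auto intro: sum_nonneg)
  also have "(\<Sum>g\<in>G. \<alpha> g) = (\<Sum>r\<in>R. \<mu> r * (\<Sum>g\<in>G. (weighted_inner R \<mu> (Y r) g)\<^sup>2))"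
    unfolding \<alpha>_def by (simp add: sum_distrib_left sum.swap[of _ G])
  also have "\<dots> = (\<Sum>r\<in>R. \<mu> r * weighted_inner R \<mu> (Y r) (Y r))"
    using Parseval_expands_in[OF Y_expands] by simp
  finally show ?thesis .
qed

section \<open>Power means\<close>

lemma sq_le_Young_powr:
  fixes q K x :: real
  assumes q: "2 \<le> q" and K: "0 < K"
  shows "x\<^sup>2 \<le> K powr (2/q) * ((2/q) * (\<bar>x\<bar> powr q / K) + (1 - 2/q))"
proof (cases "x = 0")
  case True
  then show ?thesis using q K by (auto intro!: mult_nonneg_nonneg add_nonneg_nonneg)
next
  case False
  have "(\<bar>x\<bar> powr q / K) powr (2/q) * 1 powr (1 - 2/q) \<le> (2/q) * (\<bar>x\<bar> powr q / K) + (1 - 2/q) * 1"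
    using q K False by (intro Youngs_inequality_0) auto
  moreover have "(\<bar>x\<bar> powr q / K) powr (2/q) = x\<^sup>2 / K powr (2/q)"
    using q K False by (simp add: powr_divide powr_powr powr_numeral[symmetric])
  ultimately show ?thesis using K by (simp add: divide_le_eq mult.commute)
qed

lemma weighted_sum_sq_le_power_mean:
  fixes w z :: "'a \<Rightarrow> real"
  assumes q: "2 \<le> q" and A: "finite A" and w: "\<And>j. j \<in> A \<Longrightarrow> 0 \<le> w j" and W: "0 < (\<Sum>j\<in>A. w j)"
  shows "(\<Sum>j\<in>A. w j * (z j)\<^sup>2) \<le> (\<Sum>j\<in>A. w j) * ((\<Sum>j\<in>A. w j * \<bar>z j\<bar> powr q) / (\<Sum>j\<in>A. w j)) powr (2/q)"
proof -
  define W where "W = (\<Sum>j\<in>A. w j)"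
  define S where "S = (\<Sum>j\<in>A. w j * \<bar>z j\<bar> powr q)"
  have S0: "0 \<le> S" unfolding S_def using w by (intro sum_nonneg) auto
  show ?thesis
  proof (cases "S = 0")
    case True
    then have "w j * \<bar>z j\<bar> powr q = 0" if "j \<in> A" for j
      using A w that sum_nonneg_eq_0_iff[of A "\<lambda>j. w j * \<bar>z j\<bar> powr q"] unfolding S_def by auto
    then have "(\<Sum>j\<in>A. w j * (z j)\<^sup>2) = 0" by (intro sum.neutral) auto
    then show ?thesis using True unfolding S_def by simp
  next
    case False
    define K where "K = S / W"
    have K: "0 < K" using False S0 W unfolding K_def W_def by simp
    have "(\<Sum>j\<in>A. w j * (z j)\<^sup>2) \<le> (\<Sum>j\<in>A. w j * (K powr (2/q) * ((2/q) * (\<bar>z j\<bar> powr q / K) + (1 - 2/q))))"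
      using w sq_le_Young_powr[OF q K] by (intro sum_mono mult_left_mono) auto
    also have "\<dots> = (\<Sum>j\<in>A. (K powr (2/q) * (2/q) / K) * (w j * \<bar>z j\<bar> powr q) + (K powr (2/q) * (1 - 2/q)) * w j)"
      by (intro sum.cong) (simp_all add: algebra_simps)
    also have "\<dots> = (K powr (2/q) * (2/q) / K) * S + (K powr (2/q) * (1 - 2/q)) * W"
      unfolding S_def W_def by (simp only: sum.distrib sum_distrib_left)
    also have "\<dots> = K powr (2/q) * W"
      using K W unfolding K_def W_def by (simp add: field_simps)
    finally show ?thesis unfolding K_def S_def W_def by (simp add: mult.commute)
  qed
qed

lemma weighted_sum_sq_le_wnorm:
  assumes q: "2 \<le> q" and w: "\<And>j. j < N \<Longrightarrow> 0 \<le> w j" and W: "0 < (\<Sum>j<N. w j)"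
    and t: "wnorm q w N z \<le> t"
  shows "(\<Sum>j<N. w j * (z j)\<^sup>2) \<le> (\<Sum>j<N. w j) * t\<^sup>2 / (\<Sum>j<N. w j) powr (2/q)"
proof -
  define W where "W = (\<Sum>j<N. w j)"
  define S where "S = (\<Sum>j<N. w j * \<bar>z j\<bar> powr q)"
  have S0: "0 \<le> S" unfolding S_def using w by (intro sum_nonneg) auto
  have St: "S powr (1/q) \<le> t" using t unfolding S_def wnorm_def .
  have "S = (S powr (1/q)) powr q" using S0 q by (simp add: powr_powr)
  also have "\<dots> \<le> t powr q" using St q by (intro powr_mono2) auto
  finally have "S / W \<le> t powr q / W" using W unfolding W_def by (simp add: divide_right_mono)
  then have "(S / W) powr (2/q) \<le> (t powr q / W) powr (2/q)"
    using S0 W q unfolding W_def by (intro powr_mono2) auto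
  also have "\<dots> = t\<^sup>2 / W powr (2/q)"
  proof -
    have "0 \<le> t" using St powr_ge_zero[of S "1/q"] by linarith
    then show ?thesis using q by (simp add: powr_divide powr_powr powr_numeral)
  qed
  finally have "W * (S / W) powr (2/q) \<le> W * (t\<^sup>2 / W powr (2/q))"
    using W unfolding W_def by (intro mult_left_mono) auto
  moreover have "(\<Sum>j<N. w j * (z j)\<^sup>2) \<le> W * (S / W) powr (2/q)"
    unfolding W_def S_def using weighted_sum_sq_le_power_mean[OF q _ _ W] w by simp
  ultimately show ?thesis unfolding W_def by simp
qed

lemma sq_bound_from_width_bound:
  fixes a W t :: real
  assumes a: "0 < a" and W: "0 < W" and t: "0 \<le> t" "t \<le> 1/3 * a powr (-1/2) * W powr (1/q)"
  shows "W * t\<^sup>2 / W powr (2/q) \<le> W / (9 * a)"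
proof -
  have "t\<^sup>2 \<le> (1/3 * a powr (-1/2) * W powr (1/q))\<^sup>2"
    using t by (intro power_mono) auto
  also have "\<dots> = 1/9 * (a powr (-1/2) * a powr (-1/2)) * (W powr (1/q) * W powr (1/q))"
    by (simp add: power2_eq_square)
  also have "\<dots> = W powr (2/q) / (9 * a)"
    using a by (simp add: powr_add[symmetric] powr_minus_divide)
  finally have "t\<^sup>2 \<le> W powr (2/q) / (9 * a)" .
  then have "W * t\<^sup>2 \<le> W * (W powr (2/q) / (9 * a))"
    using W by (intro mult_left_mono) auto
  then show ?thesis
    using W by (simp add: divide_le_eq)
qed

section \<open>Product weights\<close>

lemma sum_PiE_prod_mult_coord:
  fixes f :: "'a \<Rightarrow> 'b \<Rightarrow> real"
  assumes A: "finite A" and B: "\<And>a. a \<in> A \<Longrightarrow> finite (B a)" and s: "s \<in> A"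
  shows "(\<Sum>g\<in>PiE A B. (\<Prod>a\<in>A. f a (g a)) * h (g s))
     = (\<Sum>p\<in>B s. f s p * h p) * (\<Prod>a\<in>A-{s}. \<Sum>p\<in>B a. f a p)"
proof -
  define F where "F a p = f a p * (if a = s then h p else 1)" for a p
  have "(\<Sum>g\<in>PiE A B. (\<Prod>a\<in>A. f a (g a)) * h (g s)) = (\<Sum>g\<in>PiE A B. \<Prod>a\<in>A. F a (g a))"
    using A s by (intro sum.cong) (simp_all add: F_def prod.distrib prod.delta)
  also have "\<dots> = (\<Prod>a\<in>A. \<Sum>p\<in>B a. F a p)"
    using prod_sum_PiE[OF A B, where f = F] by simp
  also have "\<dots> = (\<Sum>p\<in>B s. F s p) * (\<Prod>a\<in>A-{s}. \<Sum>p\<in>B a. F a p)"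
    using prod.remove[OF A s] by simp
  also have "(\<Prod>a\<in>A-{s}. \<Sum>p\<in>B a. F a p) = (\<Prod>a\<in>A-{s}. \<Sum>p\<in>B a. f a p)"
    unfolding F_def by (intro prod.cong refl sum.cong) auto
  finally show ?thesis unfolding F_def by simp
qed

text \<open>
  The variance of a sum of independent centred random variables is the sum of their variances,
  for the product weights on PiE A B.
\<close>
lemma sum_PiE_prod_sum_sq:
  fixes f c :: "'a \<Rightarrow> 'b \<Rightarrow> real"
  assumes A: "finite A" and B: "\<And>a. a \<in> A \<Longrightarrow> finite (B a)"
    and total: "\<And>a. a \<in> A \<Longrightarrow> (\<Sum>p\<in>B a. f a p) = 1"
    and centred: "\<And>a. a \<in> A \<Longrightarrow> (\<Sum>p\<in>B a. f a p * c a p) = 0"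
  shows "(\<Sum>g\<in>PiE A B. (\<Prod>a\<in>A. f a (g a)) * (\<Sum>a\<in>A. c a (g a))\<^sup>2) = (\<Sum>a\<in>A. \<Sum>p\<in>B a. f a p * (c a p)\<^sup>2)"
proof -
  define E where "E a a' = (\<Sum>g\<in>PiE A B. (\<Prod>a\<in>A. f a (g a)) * (c a (g a) * c a' (g a')))" for a a'
  have diagonal: "E a a = (\<Sum>p\<in>B a. f a p * (c a p)\<^sup>2)" if a: "a \<in> A" for a
    using sum_PiE_prod_mult_coord[OF A B a, where f = f and h = "\<lambda>p. (c a p)\<^sup>2"] total
    unfolding E_def by (simp add: power2_eq_square)
  have off_diagonal: "E a a' = 0" if a: "a \<in> A" and a': "a' \<in> A" "a \<noteq> a'" for a a'
  proof -
    define F where "F b p = f b p * (if b = a' then c a' p else 1)" for b p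
    have "(\<Prod>b\<in>A. F b (g b)) = (\<Prod>b\<in>A. f b (g b)) * c a' (g a')" for g
      unfolding F_def using A a'(1) by (simp add: prod.distrib prod.delta)
    then have "E a a' = (\<Sum>g\<in>PiE A B. (\<Prod>b\<in>A. F b (g b)) * c a (g a))"
      unfolding E_def by (simp only: ac_simps)
    also have "\<dots> = (\<Sum>p\<in>B a. F a p * c a p) * (\<Prod>b\<in>A-{a}. \<Sum>p\<in>B b. F b p)"
      by (rule sum_PiE_prod_mult_coord[OF A B a])
    also have "(\<Sum>p\<in>B a. F a p * c a p) = 0"
      using centred[OF a] a' unfolding F_def by simp
    finally show ?thesis by simp
  qed
  have "(\<Sum>g\<in>PiE A B. (\<Prod>a\<in>A. f a (g a)) * (\<Sum>a\<in>A. c a (g a))\<^sup>2)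
      = (\<Sum>g\<in>PiE A B. \<Sum>a\<in>A. \<Sum>a'\<in>A. (\<Prod>a\<in>A. f a (g a)) * (c a (g a) * c a' (g a')))"
    unfolding power2_eq_square sum_product by (simp add: sum_distrib_left)
  also have "\<dots> = (\<Sum>a\<in>A. \<Sum>a'\<in>A. E a a')"
    unfolding E_def by (subst sum.swap) (simp only: sum.swap[of _ "PiE A B"])
  also have "\<dots> = (\<Sum>a\<in>A. E a a)"
  proof (rule sum.cong[OF refl])
    fix a assume a: "a \<in> A"
    have "(\<Sum>a'\<in>A. E a a') = E a a + (\<Sum>a'\<in>A-{a}. E a a')"
      by (rule sum.remove[OF A a])
    also have "(\<Sum>a'\<in>A-{a}. E a a') = 0"
      using off_diagonal[OF a] by (intro sum.neutral) auto
    finally show "(\<Sum>a'\<in>A. E a a') = E a a" by simp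
  qed
  finally show ?thesis using diagonal by simp
qed

lemma sum_times_signs:
  "finite A \<Longrightarrow> (\<Sum>p\<in>A \<times> {-1, 1::real}. F p) = (\<Sum>i\<in>A. F (i, -1) + F (i, 1))"
  using sum.cartesian_product[of "\<lambda>i e. F (i, e)" "{-1, 1::real}" A] by simp

section \<open>Lower bounds for Kolmogorov widths\<close>

lemma kolmogorov_width_ge:
  assumes norm: "is_norm_on N nX" and K: "K \<subseteq> RN N" and bounded: "bdd_above (nX ` K)"
    and far: "\<And>Q. Q \<subseteq> RN N \<Longrightarrow> fs.subspace Q \<Longrightarrow> fs.dim Q \<le> n \<Longrightarrow> \<exists>x\<in>K. \<forall>y\<in>Q. t \<le> nX (x - y)"
  shows "t \<le> kolmogorov_width N nX K n"
  unfolding kolmogorov_width_def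
proof (rule cInf_greatest)
  have "fs.dim {0} = card ({} :: (nat \<Rightarrow> real) set)"
    using fs.independent_empty by (intro fs.dim_eq_card) (simp_all add: fs.dependent_def)
  then have "{0} \<subseteq> RN N \<and> fs.subspace {0} \<and> fs.dim {0} \<le> n"
    using RN_zero by simp
  then show "{Sup ((\<lambda>x. Inf ((\<lambda>y. nX (x - y)) ` Q)) ` K) |Q.
      Q \<subseteq> RN N \<and> fs.subspace Q \<and> fs.dim Q \<le> n} \<noteq> {}"
    by blast
next
  fix v assume "v \<in> {Sup ((\<lambda>x. Inf ((\<lambda>y. nX (x - y)) ` Q)) ` K) |Q.
      Q \<subseteq> RN N \<and> fs.subspace Q \<and> fs.dim Q \<le> n}"
  then obtain Q where v: "v = Sup ((\<lambda>x. Inf ((\<lambda>y. nX (x - y)) ` Q)) ` K)"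
    and Q: "Q \<subseteq> RN N" "fs.subspace Q" "fs.dim Q \<le> n" by blast
  have Q0: "0 \<in> Q" using fs.subspace_0[OF Q(2)] .
  obtain x where x: "x \<in> K" and far_x: "\<forall>y\<in>Q. t \<le> nX (x - y)"
    using far[OF Q] by blast
  have below: "bdd_below ((\<lambda>y. nX (x' - y)) ` Q)" if "x' \<in> K" for x'
    using that K Q(1) by (intro bdd_belowI2[of _ 0]) (auto intro: is_norm_on_nonneg[OF norm] RN_diff)
  obtain b where b: "\<And>x'. x' \<in> K \<Longrightarrow> nX x' \<le> b"
    using bounded by (auto simp: bdd_above_def)
  have "bdd_above ((\<lambda>x. Inf ((\<lambda>y. nX (x - y)) ` Q)) ` K)"
  proof (rule bdd_aboveI2)
    fix x' assume x': "x' \<in> K"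
    have "Inf ((\<lambda>y. nX (x' - y)) ` Q) \<le> nX (x' - 0)"
      by (rule cInf_lower[OF _ below[OF x']]) (rule imageI[OF Q0])
    then show "Inf ((\<lambda>y. nX (x' - y)) ` Q) \<le> b"
      using b[OF x'] by simp
  qed
  moreover have "t \<le> Inf ((\<lambda>y. nX (x - y)) ` Q)"
    using Q0 far_x by (intro cInf_greatest) auto
  ultimately show "t \<le> v"
    unfolding v using x by (intro cSup_upper2) auto
qed

section \<open>Random vertices of a product of octahedra\<close>

locale weighted_blocks =
  fixes N m :: nat and \<Delta> :: "nat \<Rightarrow> nat set" and w :: "nat \<Rightarrow> real"
  assumes one_le_m: "1 \<le> m"
    and weight_nonneg: "\<And>i. i < N \<Longrightarrow> 0 \<le> w i"
    and block_subset: "\<And>s. s \<in> {1..m} \<Longrightarrow> \<Delta> s \<subseteq> {..<N}"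
    and blocks_disjoint: "\<And>s t. s \<in> {1..m} \<Longrightarrow> t \<in> {1..m} \<Longrightarrow> s \<noteq> t \<Longrightarrow> \<Delta> s \<inter> \<Delta> t = {}"
    and blocks_cover: "(\<Union>s\<in>{1..m}. \<Delta> s) = {..<N}"
    and block_sums_pos: "\<And>s. s \<in> {1..m} \<Longrightarrow> 0 < (\<Sum>i\<in>\<Delta> s. w i)"
begin

abbreviation W :: real where
  "W \<equiv> \<Sum>i<N. w i"

definition block_weight :: "nat \<Rightarrow> real" where
  "block_weight s = (\<Sum>i\<in>\<Delta> s. w i)"

definition max_block_share :: real where
  "max_block_share = Max ((\<lambda>s. block_weight s / W) ` {1..m})"

lemma finite_block: "s \<in> {1..m} \<Longrightarrow> finite (\<Delta> s)"
  using block_subset finite_subset by blast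

lemma sum_over_blocks: "(\<Sum>s\<in>{1..m}. \<Sum>j\<in>\<Delta> s. F j) = (\<Sum>j<N. F j)"
proof -
  have "(\<Sum>s\<in>{1..m}. \<Sum>j\<in>\<Delta> s. F j) = sum F (\<Union>s\<in>{1..m}. \<Delta> s)"
    using finite_block blocks_disjoint by (intro sum.UNION_disjoint[symmetric]) auto
  then show ?thesis by (simp only: blocks_cover)
qed

lemma sum_block_weight: "(\<Sum>s\<in>{1..m}. block_weight s) = W"
  unfolding block_weight_def by (rule sum_over_blocks)

lemma block_weight_pos: "s \<in> {1..m} \<Longrightarrow> 0 < block_weight s"
  unfolding block_weight_def by (rule block_sums_pos)

lemma W_pos: "0 < W"
  unfolding sum_block_weight[symmetric] using one_le_m block_weight_pos
  by (intro sum_pos) auto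

lemma block_weight_le_max_block_share: "s \<in> {1..m} \<Longrightarrow> block_weight s \<le> max_block_share * W"
  using W_pos by (auto simp: max_block_share_def pos_divide_le_eq[symmetric] intro: Max_ge)

lemma max_block_share_pos: "0 < max_block_share"
proof -
  have "0 < block_weight 1" "block_weight 1 \<le> max_block_share * W"
    using one_le_m block_weight_pos block_weight_le_max_block_share by auto
  then have "0 < max_block_share * W" by linarith
  with W_pos show ?thesis by (simp add: zero_less_mult_iff)
qed

text \<open>
  A configuration chooses in every block s an index i_s and a sign e_s. It encodes the vertex
  config_vec of the product of octahedra with entry e_s at i_s, drawn with probability
  config_prob: i_s with probability w i_s / block_weight s and e_s uniformly, independently
  over the blocks.
\<close>
definition configs :: "(nat \<Rightarrow> nat \<times> real) set" where
  "configs = PiE {1..m} (\<lambda>s. \<Delta> s \<times> {-1, 1::real})"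

definition config_vec :: "(nat \<Rightarrow> nat \<times> real) \<Rightarrow> nat \<Rightarrow> real" where
  "config_vec g = (\<lambda>j. \<Sum>s\<in>{1..m}. if fst (g s) = j then snd (g s) else 0)"

definition config_prob :: "(nat \<Rightarrow> nat \<times> real) \<Rightarrow> real" where
  "config_prob g = (\<Prod>s\<in>{1..m}. w (fst (g s)) / (2 * block_weight s))"

definition config_functional :: "(nat \<Rightarrow> nat \<times> real) \<Rightarrow> (nat \<Rightarrow> real) \<Rightarrow> real" where
  "config_functional g y = (\<Sum>s\<in>{1..m}. block_weight s * snd (g s) * y (fst (g s)))"

lemma finite_configs: "finite configs"
  unfolding configs_def using finite_block by (intro finite_PiE) auto

lemma config_index: "g \<in> configs \<Longrightarrow> s \<in> {1..m} \<Longrightarrow> fst (g s) \<in> \<Delta> s"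
  unfolding configs_def by (auto dest!: PiE_mem)

lemma config_index_less: "g \<in> configs \<Longrightarrow> s \<in> {1..m} \<Longrightarrow> fst (g s) < N"
  using config_index block_subset by blast

lemma config_sign: "g \<in> configs \<Longrightarrow> s \<in> {1..m} \<Longrightarrow> snd (g s) = -1 \<or> snd (g s) = 1"
  unfolding configs_def by (auto dest!: PiE_mem)

lemma config_vec_block:
  assumes g: "g \<in> configs" and t: "t \<in> {1..m}" and j: "j \<in> \<Delta> t"
  shows "config_vec g j = (if fst (g t) = j then snd (g t) else 0)"
proof -
  have "fst (g s) \<noteq> j" if s: "s \<in> {1..m} - {t}" for s
  proof
    assume "fst (g s) = j"
    then have "j \<in> \<Delta> s \<inter> \<Delta> t" using config_index[OF g] s j by auto
    with blocks_disjoint[of s t] s t show False by auto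
  qed
  then have "(\<Sum>s\<in>{1..m} - {t}. if fst (g s) = j then snd (g s) else 0) = 0"
    by (intro sum.neutral) auto
  then show ?thesis
    unfolding config_vec_def using sum.remove[OF _ t, of "\<lambda>s. if fst (g s) = j then snd (g s) else 0"]
    by simp
qed

lemma config_vec_in_octa_prod:
  assumes g: "g \<in> configs"
  shows "config_vec g \<in> octa_prod N m \<Delta>"
proof -
  have "config_vec g j = 0" if j: "N \<le> j" for j
  proof -
    have "fst (g s) \<noteq> j" if "s \<in> {1..m}" for s
      using config_index_less[OF g that] j by simp
    then show ?thesis unfolding config_vec_def by (intro sum.neutral) auto
  qed
  then have "config_vec g \<in> RN N" by (simp add: RN_def)
  moreover have "(\<Sum>j\<in>\<Delta> t. \<bar>config_vec g j\<bar>) = 1" if t: "t \<in> {1..m}" for t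
  proof -
    have "(\<Sum>j\<in>\<Delta> t. \<bar>config_vec g j\<bar>) = (\<Sum>j\<in>\<Delta> t. if fst (g t) = j then \<bar>snd (g t)\<bar> else 0)"
      using config_vec_block[OF g t] by (intro sum.cong) auto
    also have "\<dots> = \<bar>snd (g t)\<bar>"
      using config_index[OF g t] finite_block[OF t] by (simp add: sum.delta)
    finally show ?thesis using config_sign[OF g t] by auto
  qed
  ultimately show ?thesis unfolding octa_prod_def by auto
qed

lemma config_prob_nonneg:
  assumes g: "g \<in> configs"
  shows "0 \<le> config_prob g"
  unfolding config_prob_def
proof (rule prod_nonneg)
  fix s assume s: "s \<in> {1..m}"
  show "0 \<le> w (fst (g s)) / (2 * block_weight s)"
    using weight_nonneg[OF config_index_less[OF g s]] block_weight_pos[OF s] by simp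
qed

lemma sum_block_choice:
  fixes h :: "nat \<times> real \<Rightarrow> real"
  assumes s: "s \<in> {1..m}"
  shows "(\<Sum>p\<in>\<Delta> s \<times> {-1, 1::real}. w (fst p) / (2 * block_weight s) * h p)
    = (\<Sum>i\<in>\<Delta> s. w i * (h (i, -1) + h (i, 1))) / (2 * block_weight s)"
  unfolding sum_times_signs[OF finite_block[OF s]] sum_divide_distrib
  using block_weight_pos[OF s] by (intro sum.cong refl) (simp add: field_simps)

lemma sum_block_choice_1:
  assumes s: "s \<in> {1..m}"
  shows "(\<Sum>p\<in>\<Delta> s \<times> {-1, 1::real}. w (fst p) / (2 * block_weight s)) = 1"
proof -
  have "(\<Sum>p\<in>\<Delta> s \<times> {-1, 1::real}. w (fst p) / (2 * block_weight s))
      = (\<Sum>i\<in>\<Delta> s. w i * 2) / (2 * block_weight s)"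
    using sum_block_choice[OF s, where h = "\<lambda>_. 1"] by simp
  also have "\<dots> = 1"
    using block_weight_pos[OF s] by (simp add: block_weight_def flip: sum_distrib_right)
  finally show ?thesis .
qed

lemma sum_config_prob: "(\<Sum>g\<in>configs. config_prob g) = 1"
proof -
  have "(\<Sum>g\<in>configs. config_prob g) = (\<Prod>s\<in>{1..m}. \<Sum>p\<in>\<Delta> s \<times> {-1, 1::real}. w (fst p) / (2 * block_weight s))"
    unfolding configs_def config_prob_def using finite_block by (subst prod_sum_PiE) auto
  also have "\<dots> = 1"
    using sum_block_choice_1 by (intro prod.neutral) simp
  finally show ?thesis .
qed

lemma second_moment_config_functional:
  "(\<Sum>g\<in>configs. config_prob g * (config_functional g y)\<^sup>2)
    = (\<Sum>s\<in>{1..m}. block_weight s * (\<Sum>j\<in>\<Delta> s. w j * (y j)\<^sup>2))"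
proof -
  define f where "f s p = w (fst p) / (2 * block_weight s)" for s and p :: "nat \<times> real"
  define c where "c s p = block_weight s * snd p * y (fst p)" for s and p :: "nat \<times> real"
  have "(\<Sum>g\<in>configs. config_prob g * (config_functional g y)\<^sup>2)
      = (\<Sum>s\<in>{1..m}. \<Sum>p\<in>\<Delta> s \<times> {-1, 1::real}. f s p * (c s p)\<^sup>2)"
    unfolding configs_def config_prob_def config_functional_def
  proof (fold f_def c_def, rule sum_PiE_prod_sum_sq)
    fix s assume s: "s \<in> {1..m}"
    show "finite (\<Delta> s \<times> {-1, 1::real})" using finite_block[OF s] by simp
    show "(\<Sum>p\<in>\<Delta> s \<times> {-1, 1::real}. f s p) = 1"
      unfolding f_def by (rule sum_block_choice_1[OF s])
    show "(\<Sum>p\<in>\<Delta> s \<times> {-1, 1::real}. f s p * c s p) = 0"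
      using sum_block_choice[OF s, where h = "c s"] unfolding f_def by (simp add: c_def)
  qed simp
  also have "\<dots> = (\<Sum>s\<in>{1..m}. block_weight s * (\<Sum>j\<in>\<Delta> s. w j * (y j)\<^sup>2))"
  proof (rule sum.cong[OF refl])
    fix s assume s: "s \<in> {1..m}"
    have "(\<Sum>p\<in>\<Delta> s \<times> {-1, 1::real}. f s p * (c s p)\<^sup>2)
        = (\<Sum>i\<in>\<Delta> s. w i * (2 * (block_weight s)\<^sup>2 * (y i)\<^sup>2)) / (2 * block_weight s)"
      unfolding f_def using sum_block_choice[OF s, where h = "\<lambda>p. (c s p)\<^sup>2"]
      by (simp add: c_def power_mult_distrib algebra_simps)
    also have "\<dots> = block_weight s * (\<Sum>j\<in>\<Delta> s. w j * (y j)\<^sup>2)"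
      using block_weight_pos[OF s]
      by (simp add: sum_distrib_left sum_divide_distrib power2_eq_square ac_simps)
    finally show "(\<Sum>p\<in>\<Delta> s \<times> {-1, 1::real}. f s p * (c s p)\<^sup>2)
        = block_weight s * (\<Sum>j\<in>\<Delta> s. w j * (y j)\<^sup>2)" .
  qed
  finally show ?thesis .
qed

lemma config_functional_lincomb:
  "config_functional g (\<Sum>b\<in>B. fscale (u b) b) = (\<Sum>b\<in>B. u b * config_functional g b)"
  unfolding config_functional_def
  by (simp add: sum_fun_apply sum_distrib_left sum.swap[of _ B] ac_simps)

lemma config_coord_sq_le:
  assumes g: "g \<in> configs" and s: "s \<in> {1..m}"
    and close: "\<bar>config_vec g (fst (g s)) - y (fst (g s))\<bar> \<le> 1/2"
  shows "(y (fst (g s)))\<^sup>2 \<le> 2 * (snd (g s) * y (fst (g s))) - 3/4"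
proof -
  define e where "e = snd (g s)"
  define a where "a = e * y (fst (g s))"
  have e: "e = -1 \<or> e = 1" using config_sign[OF g s] unfolding e_def .
  have "config_vec g (fst (g s)) = e"
    using config_vec_block[OF g s config_index[OF g s]] unfolding e_def by simp
  then have "1/2 \<le> a" "a \<le> 3/2" using close e unfolding a_def by (auto simp: abs_if split: if_splits)
  then have "0 \<le> (a - 1/2) * (3/2 - a)" by (intro mult_nonneg_nonneg) auto
  moreover have "(a - 1/2) * (3/2 - a) = 2 * a - a\<^sup>2 - 3/4"
    by (simp add: field_simps power2_eq_square)
  ultimately have "a\<^sup>2 \<le> 2 * a - 3/4" by linarith
  moreover have "(y (fst (g s)))\<^sup>2 = a\<^sup>2" using e unfolding a_def by auto
  ultimately have "(y (fst (g s)))\<^sup>2 \<le> 2 * a - 3/4" by simp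
  then show ?thesis by (simp only: a_def e_def)
qed

lemma block_sum_sq_le:
  assumes g: "g \<in> configs" and s: "s \<in> {1..m}"
  shows "(\<Sum>j\<in>\<Delta> s. w j * (y j)\<^sup>2)
    \<le> w (fst (g s)) * (y (fst (g s)))\<^sup>2 + (\<Sum>j\<in>\<Delta> s. w j * (config_vec g j - y j)\<^sup>2)"
proof -
  define i where "i = fst (g s)"
  have i: "i \<in> \<Delta> s" using config_index[OF g s] unfolding i_def .
  have "(\<Sum>j\<in>\<Delta> s. w j * (y j)\<^sup>2) = w i * (y i)\<^sup>2 + (\<Sum>j\<in>\<Delta> s - {i}. w j * (y j)\<^sup>2)"
    by (rule sum.remove[OF finite_block[OF s] i])
  also have "(\<Sum>j\<in>\<Delta> s - {i}. w j * (y j)\<^sup>2) = (\<Sum>j\<in>\<Delta> s - {i}. w j * (config_vec g j - y j)\<^sup>2)"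
    using config_vec_block[OF g s] unfolding i_def by (intro sum.cong) auto
  also have "\<dots> \<le> (\<Sum>j\<in>\<Delta> s. w j * (config_vec g j - y j)\<^sup>2)"
    using finite_block[OF s] block_subset[OF s] weight_nonneg by (intro sum_mono2) auto
  finally show ?thesis unfolding i_def by simp
qed

text \<open>
  In block s the coordinate i_s contributes at most omega * (2 e_s y(i_s) - 3/4), because
  y(i_s) lies within 1/2 of the sign e_s; the other coordinates only contribute their l2 error.
\<close>
lemma second_moment_near_config:
  assumes g: "g \<in> configs"
    and close: "\<And>j. j < N \<Longrightarrow> \<bar>config_vec g j - y j\<bar> \<le> 1/2"
    and light: "\<And>i. i < N \<Longrightarrow> w i \<le> \<omega>"
  shows "(\<Sum>g'\<in>configs. config_prob g' * (config_functional g' y)\<^sup>2)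
    \<le> \<omega> * (2 * config_functional g y - 3/4 * W)
      + max_block_share * W * (\<Sum>j<N. w j * (config_vec g j - y j)\<^sup>2)"
proof -
  define Z where "Z s = (\<Sum>j\<in>\<Delta> s. w j * (config_vec g j - y j)\<^sup>2)" for s
  have per_block: "block_weight s * (\<Sum>j\<in>\<Delta> s. w j * (y j)\<^sup>2)
      \<le> \<omega> * (2 * (block_weight s * snd (g s) * y (fst (g s))) - 3/4 * block_weight s)
        + max_block_share * W * Z s"
    if s: "s \<in> {1..m}" for s
  proof -
    define i where "i = fst (g s)"
    have i: "i < N" using config_index_less[OF g s] unfolding i_def .
    have Wb: "0 < block_weight s" by (rule block_weight_pos[OF s])
    have Z: "0 \<le> Z s"
      unfolding Z_def using block_subset[OF s] weight_nonneg by (intro sum_nonneg) auto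
    have sq: "(y i)\<^sup>2 \<le> 2 * (snd (g s) * y i) - 3/4"
      using config_coord_sq_le[where y = y, OF g s close[OF config_index_less[OF g s]]]
      unfolding i_def .
    have "w i * (y i)\<^sup>2 \<le> \<omega> * (y i)\<^sup>2"
      using light[OF i] by (intro mult_right_mono) auto
    also have "\<dots> \<le> \<omega> * (2 * (snd (g s) * y i) - 3/4)"
      using sq weight_nonneg[OF i] light[OF i] by (intro mult_left_mono) auto
    finally have "w i * (y i)\<^sup>2 + Z s \<le> \<omega> * (2 * (snd (g s) * y i) - 3/4) + Z s"
      by simp
    then have "block_weight s * (\<Sum>j\<in>\<Delta> s. w j * (y j)\<^sup>2)
        \<le> block_weight s * (\<omega> * (2 * (snd (g s) * y i) - 3/4)) + block_weight s * Z s"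
      using block_sum_sq_le[OF g s, of y] Wb unfolding Z_def i_def
      by (simp add: distrib_left[symmetric] mult_left_mono)
    also have "block_weight s * Z s \<le> max_block_share * W * Z s"
      using block_weight_le_max_block_share[OF s] Z by (intro mult_right_mono)
    finally show ?thesis unfolding i_def by (simp add: algebra_simps)
  qed
  have "(\<Sum>g'\<in>configs. config_prob g' * (config_functional g' y)\<^sup>2)
      = (\<Sum>s\<in>{1..m}. block_weight s * (\<Sum>j\<in>\<Delta> s. w j * (y j)\<^sup>2))"
    by (rule second_moment_config_functional)
  also have "\<dots> \<le> (\<Sum>s\<in>{1..m}. \<omega> * (2 * (block_weight s * snd (g s) * y (fst (g s))) - 3/4 * block_weight s)
        + max_block_share * W * Z s)"
    using per_block by (rule sum_mono)
  also have "\<dots> = \<omega> * (2 * (\<Sum>s\<in>{1..m}. block_weight s * snd (g s) * y (fst (g s)))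
        - 3/4 * (\<Sum>s\<in>{1..m}. block_weight s)) + max_block_share * W * (\<Sum>s\<in>{1..m}. Z s)"
    by (simp only: sum.distrib sum_subtractf sum_distrib_left[symmetric])
  also have "\<dots> = \<omega> * (2 * config_functional g y - 3/4 * W)
      + max_block_share * W * (\<Sum>j<N. w j * (config_vec g j - y j)\<^sup>2)"
    unfolding config_functional_def Z_def sum_over_blocks sum_block_weight ..
  finally show ?thesis .
qed

lemma configs_not_uniformly_approximable:
  assumes n: "1 \<le> n" and light: "\<And>i. i < N \<Longrightarrow> w i \<le> W / (4 * real n)"
    and Q: "Q \<subseteq> RN N" "fs.dim Q \<le> n"
    and y: "\<And>g. g \<in> configs \<Longrightarrow> y g \<in> Q"
    and sup_close: "\<And>g j. g \<in> configs \<Longrightarrow> j < N \<Longrightarrow> \<bar>config_vec g j - y g j\<bar> \<le> 1/2"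
    and l2_close: "\<And>g. g \<in> configs \<Longrightarrow>
      (\<Sum>j<N. w j * (config_vec g j - y g j)\<^sup>2) \<le> W / (9 * real n * max_block_share)"
  shows False
proof -
  define T where "T = (\<Sum>g\<in>configs. config_prob g * config_functional g (y g))"
  define M where "M g = (\<Sum>g'\<in>configs. config_prob g' * (config_functional g' (y g))\<^sup>2)" for g
  obtain B where B: "finite B" "card B = fs.dim Q" "\<And>v. v \<in> Q \<Longrightarrow> \<exists>u. v = (\<Sum>b\<in>B. fscale (u b) b)"
    using RN_subspace_finite_spanning_set[OF Q(1)] by blast
  have rank: "\<exists>u. \<forall>g'\<in>configs. config_functional g' (y g) = (\<Sum>b\<in>B. u b * config_functional g' b)"
    if g: "g \<in> configs" for g
  proof -
    obtain u where "y g = (\<Sum>b\<in>B. fscale (u b) b)" using B(3) y[OF g] by blast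
    then show ?thesis by (auto simp: config_functional_lincomb)
  qed
  have "T\<^sup>2 \<le> real n * (\<Sum>g\<in>configs. config_prob g * M g)"
    using trace_sq_le_rank_mult_hs_norm[where R = configs and \<mu> = config_prob and B = B and n = n
        and Y = "\<lambda>g g'. config_functional g' (y g)" and P = "\<lambda>b g'. config_functional g' b"]
      finite_configs config_prob_nonneg B(1,2) Q(2) rank
    unfolding T_def M_def weighted_inner_def by (simp add: power2_eq_square mult.assoc)
  also have "\<dots> = (\<Sum>g\<in>configs. config_prob g * (real n * M g))"
    by (simp add: sum_distrib_left ac_simps)
  also have "\<dots> \<le> (\<Sum>g\<in>configs. config_prob g * (W/4 * (2 * config_functional g (y g) - 3/4 * W) + W\<^sup>2/9))"
  proof (intro sum_mono mult_left_mono config_prob_nonneg)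
    fix g assume g: "g \<in> configs"
    have "M g \<le> W / (4 * real n) * (2 * config_functional g (y g) - 3/4 * W)
        + max_block_share * W * (\<Sum>j<N. w j * (config_vec g j - y g j)\<^sup>2)"
      unfolding M_def using sup_close[OF g] light by (rule second_moment_near_config[OF g])
    also have "max_block_share * W * (\<Sum>j<N. w j * (config_vec g j - y g j)\<^sup>2)
        \<le> max_block_share * W * (W / (9 * real n * max_block_share))"
      using l2_close[OF g] max_block_share_pos W_pos by (intro mult_left_mono) auto
    finally have "real n * M g \<le> real n * (W / (4 * real n) * (2 * config_functional g (y g) - 3/4 * W)
        + max_block_share * W * (W / (9 * real n * max_block_share)))"
      using n by (intro mult_left_mono) auto
    also have "\<dots> = W/4 * (2 * config_functional g (y g) - 3/4 * W) + W\<^sup>2/9"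
      using n max_block_share_pos by (simp add: field_simps power2_eq_square)
    finally show "real n * M g \<le> W/4 * (2 * config_functional g (y g) - 3/4 * W) + W\<^sup>2/9" .
  qed
  also have "\<dots> = (\<Sum>g\<in>configs. W/2 * (config_prob g * config_functional g (y g))
      + (W\<^sup>2/9 - 3/16 * W\<^sup>2) * config_prob g)"
    by (intro sum.cong refl) (simp add: algebra_simps power2_eq_square)
  also have "\<dots> = W/2 * T + (W\<^sup>2/9 - 3/16 * W\<^sup>2) * (\<Sum>g\<in>configs. config_prob g)"
    unfolding T_def by (simp only: sum.distrib sum_distrib_left[symmetric])
  finally have "T\<^sup>2 \<le> W/2 * T + (W\<^sup>2/9 - 3/16 * W\<^sup>2)"
    by (simp add: sum_config_prob)
  moreover have "0 \<le> (T - W/4)\<^sup>2" by simp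
  moreover have "(T - W/4)\<^sup>2 = T\<^sup>2 - W/2 * T + W\<^sup>2/16" by (simp add: power2_eq_square field_simps)
  moreover have "0 < W\<^sup>2" using W_pos by simp
  ultimately show False by linarith
qed

lemma exists_config_far_from_subspace:
  assumes n: "1 \<le> n" and light: "\<And>i. i < N \<Longrightarrow> w i \<le> W / (4 * real n)"
    and q: "2 \<le> q" and dominated: "\<forall>x\<in>RN N. nX x \<ge> max (wnorm q w N x) (h * supnorm N x)"
    and t: "t \<le> h/2" "t \<le> 1/3 * (real n * max_block_share) powr (-1/2) * W powr (1/q)"
    and h: "0 < h" and Q: "Q \<subseteq> RN N" "fs.dim Q \<le> n"
  shows "\<exists>g\<in>configs. \<forall>v\<in>Q. t \<le> nX (config_vec g - v)"
proof (rule ccontr)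
  assume "\<not> ?thesis"
  then have "\<forall>g\<in>configs. \<exists>v. v \<in> Q \<and> nX (config_vec g - v) < t"
    by (auto simp: not_le)
  then obtain y where y: "\<And>g. g \<in> configs \<Longrightarrow> y g \<in> Q" "\<And>g. g \<in> configs \<Longrightarrow> nX (config_vec g - y g) < t"
    by metis
  have error_RN: "config_vec g - y g \<in> RN N" if g: "g \<in> configs" for g
    using config_vec_in_octa_prod[OF g] y(1)[OF g] Q(1) by (auto simp: octa_prod_def intro: RN_diff)
  show False
  proof (rule configs_not_uniformly_approximable[OF n light Q y(1)])
    fix g j assume g: "g \<in> configs" and j: "j < N"
    have "h * supnorm N (config_vec g - y g) < h * (1/2)"
      using dominated error_RN[OF g] y(2)[OF g] t(1) by fastforce
    then have "supnorm N (config_vec g - y g) < 1/2"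
      using h by (simp only: mult_less_cancel_left_pos)
    moreover have "\<bar>config_vec g j - y g j\<bar> \<le> supnorm N (config_vec g - y g)"
      unfolding supnorm_def using j by (intro Max_ge) auto
    ultimately show "\<bar>config_vec g j - y g j\<bar> \<le> 1/2" by simp
  next
    fix g assume g: "g \<in> configs"
    have "wnorm q w N (config_vec g - y g) \<le> t"
      using dominated error_RN[OF g] y(2)[OF g] by fastforce
    then have "(\<Sum>j<N. w j * ((config_vec g - y g) j)\<^sup>2) \<le> W * t\<^sup>2 / W powr (2/q)"
      using weighted_sum_sq_le_wnorm[OF q] weight_nonneg W_pos by blast
    also have "\<dots> \<le> W / (9 * (real n * max_block_share))"
    proof (rule sq_bound_from_width_bound[OF _ W_pos _ t(2)])
      show "0 < real n * max_block_share" using n max_block_share_pos by simp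
      have "0 \<le> wnorm q w N (config_vec g - y g)" by (simp add: wnorm_def)
      then show "0 \<le> t" using \<open>wnorm q w N (config_vec g - y g) \<le> t\<close> by linarith
    qed
    finally show "(\<Sum>j<N. w j * (config_vec g j - y g j)\<^sup>2) \<le> W / (9 * real n * max_block_share)"
      by (simp add: mult.assoc)
  qed
qed

lemma bdd_above_norm_octa_prod:
  assumes norm: "is_norm_on N nX"
  shows "bdd_above (nX ` octa_prod N m \<Delta>)"
proof (rule bdd_aboveI2)
  fix x assume x: "x \<in> octa_prod N m \<Delta>"
  have "\<bar>x j\<bar> \<le> 1" if j: "j < N" for j
  proof -
    obtain s where s: "s \<in> {1..m}" "j \<in> \<Delta> s" using j blocks_cover by blast
    have "\<bar>x j\<bar> \<le> (\<Sum>i\<in>\<Delta> s. \<bar>x i\<bar>)"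
      using finite_block[OF s(1)] s(2) by (intro member_le_sum) auto
    also have "\<dots> \<le> 1" using x s(1) unfolding octa_prod_def by blast
    finally show ?thesis .
  qed
  then show "nX x \<le> (\<Sum>j<N. nX (unit_vec j))"
    using x unfolding octa_prod_def by (intro is_norm_on_le_sum_unit_vec[OF norm]) auto
qed

lemma kolmogorov_width_octa_prod_ge:
  assumes n: "1 \<le> n" and light: "Max (w ` {..<N}) \<le> W / (4 * real n)"
    and q: "2 \<le> q" and h: "0 < h" and norm: "is_norm_on N nX"
    and dominated: "\<forall>x\<in>RN N. nX x \<ge> max (wnorm q w N x) (h * supnorm N x)"
  shows "min (1/3 * (real n * max_block_share) powr (-1/2) * W powr (1/q)) (h/2)
    \<le> kolmogorov_width N nX (octa_prod N m \<Delta>) n"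
proof (rule kolmogorov_width_ge[OF norm _ bdd_above_norm_octa_prod[OF norm]])
  show "octa_prod N m \<Delta> \<subseteq> RN N" by (auto simp: octa_prod_def)
  have "w i \<le> W / (4 * real n)" if "i < N" for i
    using light that by (meson Max_ge finite_imageI finite_lessThan image_eqI lessThan_iff order_trans)
  then show "\<exists>x\<in>octa_prod N m \<Delta>. \<forall>y\<in>Q.
      min (1/3 * (real n * max_block_share) powr (-1/2) * W powr (1/q)) (h/2) \<le> nX (x - y)"
    if "Q \<subseteq> RN N" "fs.dim Q \<le> n" for Q
    using exists_config_far_from_subspace[OF n _ q dominated _ _ h that] config_vec_in_octa_prod
    by (metis min.cobounded1 min.cobounded2)
qed

end

lemma octa_prod_width_lower_bound:
  fixes w :: "nat \<Rightarrow> real" and \<Delta> :: "nat \<Rightarrow> nat set" and nX :: "(nat \<Rightarrow> real) \<Rightarrow> real"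
  assumes "0 < C" "1 \<le> n" "\<forall>i<N. 0 \<le> w i" and W: "0 < (\<Sum>i<N. w i)"
    and "\<forall>s\<in>{1..m}. \<Delta> s \<subseteq> {..<N}"
    and "\<forall>s\<in>{1..m}. \<forall>t\<in>{1..m}. s \<noteq> t \<longrightarrow> \<Delta> s \<inter> \<Delta> t = {}"
    and cover: "(\<Union>s\<in>{1..m}. \<Delta> s) = {..<N}"
    and "Max (w ` {..<N}) \<le> (\<Sum>i<N. w i) / (4 * real n)"
    and share: "\<forall>s\<in>{1..m}. (\<Sum>i\<in>\<Delta> s. w i) / (\<Sum>i<N. w i) \<ge> C * ln (2 * real m) / real n"
    and "2 \<le> q" "0 < h" "is_norm_on N nX"
    and "\<forall>x\<in>RN N. nX x \<ge> max (wnorm q w N x) (h * supnorm N x)"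
  shows "min (1/3 * (real n * Max ((\<lambda>s. (\<Sum>i\<in>\<Delta> s. w i) / (\<Sum>i<N. w i)) ` {1..m})) powr (-1/2)
      * (\<Sum>i<N. w i) powr (1 / q)) (h / 2) \<le> kolmogorov_width N nX (octa_prod N m \<Delta>) n"
proof -
  txt \<open>The lower bound on the block shares only serves to make every block weight positive.\<close>
  have m: "1 \<le> m"
    using cover W by (cases m) auto
  have "0 < (\<Sum>i\<in>\<Delta> s. w i)" if "s \<in> {1..m}" for s
  proof -
    have "0 < C * ln (2 * real m) / real n" using assms(1,2) m by simp
    also have "\<dots> \<le> (\<Sum>i\<in>\<Delta> s. w i) / (\<Sum>i<N. w i)" using share that by blast
    finally show ?thesis using W by (simp add: zero_less_divide_iff)
  qed
  then interpret weighted_blocks N m \<Delta> w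
    using assms m by unfold_locales auto
  show ?thesis
    using kolmogorov_width_octa_prod_ge assms
    unfolding max_block_share_def block_weight_def by simp
qed

theorem theorem2:
  shows "\<exists>C::real. C > 0 \<and> (\<exists>c::real \<Rightarrow> real. (\<forall>q\<ge>2. c q > 0) \<and>
    (\<forall>(N::nat) (n::nat) (m::nat) (w::nat \<Rightarrow> real) (\<Delta>::nat \<Rightarrow> nat set) (q::real) (h::real)
       (nX::(nat \<Rightarrow> real) \<Rightarrow> real).
       n \<ge> 1 \<longrightarrow>
       (\<forall>i<N. w i \<ge> 0) \<longrightarrow>
       (\<Sum>i<N. w i) > 0 \<longrightarrow>
       (\<forall>s\<in>{1..m}. \<Delta> s \<subseteq> {..<N}) \<longrightarrow>
       (\<forall>s\<in>{1..m}. \<forall>t\<in>{1..m}. s \<noteq> t \<longrightarrow> \<Delta> s \<inter> \<Delta> t = {}) \<longrightarrow>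
       (\<Union>s\<in>{1..m}. \<Delta> s) = {..<N} \<longrightarrow>
       Max (w ` {..<N}) \<le> (\<Sum>i<N. w i) / (4 * real n) \<longrightarrow>
       (\<forall>s\<in>{1..m}. (\<Sum>i\<in>\<Delta> s. w i) / (\<Sum>i<N. w i) \<ge> C * ln (2 * real m) / real n) \<longrightarrow>
       q \<ge> 2 \<longrightarrow> h > 0 \<longrightarrow>
       is_norm_on N nX \<longrightarrow>
       (\<forall>x\<in>RN N. nX x \<ge> max (wnorm q w N x) (h * supnorm N x)) \<longrightarrow>
       kolmogorov_width N nX (octa_prod N m \<Delta>) n \<ge>
         min (c q * (real n * Max ((\<lambda>s. (\<Sum>i\<in>\<Delta> s. w i) / (\<Sum>i<N. w i)) ` {1..m})) powr (-1/2)
                  * (\<Sum>i<N. w i) powr (1 / q))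
             (h / 2)))"
  by (intro exI[of _ "1::real"] exI[of _ "\<lambda>_::real. 1/3::real"] conjI allI impI
      octa_prod_width_lower_bound[where C = 1]) simp_all

end
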